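(* Let $q$ be a power of $2$ and let $\alpha,\beta \in \mathbb{F}_{q^2}$ be such that the line $\{(\alpha t+\beta, t)\}$ is not tangent to the Hermitian curve $x^q+x=y^{q+1}$. Let $\gamma = \beta+\beta^q$, let $\sigma_0,\dots,\sigma_q$ be the roots of $p(t) = t^{q+1} + \alpha^q t^q + \alpha t + \gamma$, and $P_k = \sum_{i=0}^q \sigma_i^k$. Then for all $0 \leq k < q$, $P_k = \alpha^{qk}$ and $P_{kq} = \alpha^k$. *)

theory Defs
  imports "HOL-Computational_Algebra.Polynomial"
begin

definition on_hermitian :: "nat \<Rightarrow> 'a::field \<Rightarrow> 'a \<Rightarrow> bool" where
  "on_hermitian q x y \<longleftrightarrow> x ^ q + x = y ^ (q + 1)"

text \<open>The line {(alpha*t + beta, t)} is tangent to the Hermitian curve: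
  it passes through a point (x0, y0) = (alpha*t0 + beta, t0) of the curve at which
  its direction vector (alpha, 1) is annihilated by the gradient of
  F(x,y) = x^q + x - y^(q+1), i.e. dF = (q x^(q-1) + 1, -(q+1) y^q).\<close>
definition line_tangent_hermitian :: "nat \<Rightarrow> 'a::field \<Rightarrow> 'a \<Rightarrow> bool" where
  "line_tangent_hermitian q \<alpha> \<beta> \<longleftrightarrow>
     (\<exists>t0. on_hermitian q (\<alpha> * t0 + \<beta>) t0 \<and>
        (of_nat q * (\<alpha> * t0 + \<beta>) ^ (q - 1) + 1) * \<alpha> - of_nat (q + 1) * t0 ^ q = 0)"

end

theory Submission
  imports Defs "HOL-Computational_Algebra.Primes"
begin

text \<open>Write the polynomial as \<open>P = (\<Prod>i. X - \<sigma>\<^sub>i)\<close>. Comparing coefficients in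
  \<open>P' = (\<Sum>i. P / (X - \<sigma>\<^sub>i))\<close> yields Newton's identities. Since \<open>P\<close> has no
  monomials of degree \<open>2, \<dots>, q - 1\<close> and \<open>q = 0\<close> in characteristic 2, they collapse
  to \<open>P\<^sub>k = \<alpha>\<^sup>q P\<^sub>k\<^sub>-\<^sub>1\<close> for \<open>1 \<le> k < q\<close>, and \<open>P\<^sub>0 = q + 1 = 1\<close> gives
  \<open>P\<^sub>k = \<alpha>\<^sup>q\<^sup>k\<close>. Then \<open>P\<^sub>k\<^sub>q = P\<^sub>k\<^sup>q\<close> by the Frobenius, and
  \<open>\<alpha>\<^sup>q\<^sup>2 = \<alpha>\<close> in a field of \<open>q\<^sup>2\<close> elements.\<close>

lemma synthetic_div_eqI:
  fixes p g :: "'a::comm_ring_1 poly"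
  assumes "[:-c, 1:] * g + [:r:] = p"
  shows "synthetic_div p c = g"
proof -
  have "p + smult c g = pCons r g"
    using assms [symmetric] by (simp add: algebra_simps)
  then show ?thesis
    using synthetic_div_unique by blast
qed

lemma synthetic_div_mult_root:
  fixes p h :: "'a::comm_ring_1 poly"
  assumes "poly p c = 0"
  shows "synthetic_div (h * p) c = h * synthetic_div p c"
proof (rule synthetic_div_eqI [where r = 0])
  have "p = [:-c, 1:] * synthetic_div p c"
    using synthetic_div_correct' [of c p] assms by simp
  then show "[:-c, 1:] * (h * synthetic_div p c) + [:0:] = h * p"
    by (simp add: mult.left_commute)
qed

lemma coeff_synthetic_div:
  fixes p :: "'a::comm_semiring_1 poly"
  shows "coeff (synthetic_div p c) n = (\<Sum>i<degree p - n. coeff p (Suc n + i) * c ^ i)"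
proof (induction p arbitrary: n rule: pCons_induct)
  case (pCons a p)
  show ?case
  proof (cases "p = 0")
    case False
    then show ?thesis
      using pCons.IH poly_altdef [of p c] by (cases n) (simp_all add: lessThan_Suc_atMost)
  qed simp
qed simp

lemma degree_prod_mset_linear:
  fixes S :: "'a::idom multiset"
  shows "degree (\<Prod>s\<in>#S. [:-s, 1:]) = size S"
proof (induction S)
  case (add a S)
  have "(\<Prod>s\<in>#S. [:-s, 1:]) \<noteq> 0"
    by (auto simp: prod_mset_zero_iff)
  then have "degree ([:-a, 1:] * (\<Prod>s\<in>#S. [:-s, 1:])) = Suc (size S)"
    using add.IH by (subst degree_mult_eq) simp_all
  then show ?case
    by simp
qed simp

lemma lead_coeff_prod_mset_linear:
  fixes S :: "'a::idom multiset"
  shows "lead_coeff (\<Prod>s\<in>#S. [:-s, 1:]) = 1"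
proof (induction S)
  case (add a S)
  have "lead_coeff ([:-a, 1:] * (\<Prod>s\<in>#S. [:-s, 1:])) = 1"
    using add.IH by (subst lead_coeff_mult) simp
  then show ?case
    by simp
qed simp

lemma pderiv_prod_mset_linear:
  fixes S :: "'a::idom multiset"
  shows "pderiv (\<Prod>s\<in>#S. [:-s, 1:]) = (\<Sum>s\<in>#S. synthetic_div (\<Prod>s\<in>#S. [:-s, 1:]) s)"
proof (induction S)
  case (add a S)
  define P where "P = (\<Prod>s\<in>#S. [:-s, 1:])"
  have "poly P s = 0" if "s \<in># S" for s
    using that unfolding P_def by (induction S) (auto simp: poly_prod_mset)
  then have "(\<Sum>s\<in>#S. synthetic_div ([:-a, 1:] * P) s) = (\<Sum>s\<in>#S. [:-a, 1:] * synthetic_div P s)"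
    by (intro arg_cong [where f = sum_mset] image_mset_cong synthetic_div_mult_root)
  moreover have "synthetic_div ([:-a, 1:] * P) a = P"
    by (rule synthetic_div_eqI [where r = 0]) simp
  moreover have "pderiv [:-a, 1:] = 1"
    by (simp add: pderiv_pCons)
  then have "pderiv ([:-a, 1:] * P) = [:-a, 1:] * pderiv P + P"
    by (simp only: pderiv_mult mult_1_right)
  ultimately show ?case
    using add.IH by (simp add: P_def sum_mset_distrib_left add.commute)
qed simp

lemma sum_mset_sum_swap:
  "(\<Sum>x\<in>#M. \<Sum>y\<in>A. g x y) = (\<Sum>y\<in>A. \<Sum>x\<in>#M. g x y)"
  by (induction M) (simp_all add: sum.distrib)

lemma coeff_sum_mset: "coeff (\<Sum>x\<in>#A. p x) n = (\<Sum>x\<in>#A. coeff (p x) n)"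
  by (induction A) simp_all

text \<open>Newton's identities, read off from the coefficient of \<open>X^(n-k-1)\<close> in
  \<open>P' = (\<Sum>s. P / (X - s))\<close>.\<close>

lemma newton_identity:
  fixes S :: "'a::idom multiset"
  defines "P \<equiv> \<Prod>s\<in>#S. [:-s, 1:]"
  assumes "k < size S"
  shows "(\<Sum>i\<le>k. coeff P (size S - k + i) * (\<Sum>s\<in>#S. s ^ i))
           = of_nat (size S - k) * coeff P (size S - k)"
proof -
  let ?j = "size S - Suc k"
  have "of_nat (size S - k) * coeff P (size S - k) = coeff (pderiv P) ?j"
    using assms(2) by (simp add: coeff_pderiv Suc_diff_Suc)
  also have "\<dots> = (\<Sum>s\<in>#S. coeff (synthetic_div P s) ?j)"
    by (simp add: P_def pderiv_prod_mset_linear coeff_sum_mset)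
  also have "\<dots> = (\<Sum>s\<in>#S. \<Sum>i\<le>k. coeff P (size S - k + i) * s ^ i)"
    using assms(2)
    by (simp add: coeff_synthetic_div P_def degree_prod_mset_linear lessThan_Suc_atMost Suc_diff_Suc)
  also have "\<dots> = (\<Sum>i\<le>k. \<Sum>s\<in>#S. coeff P (size S - k + i) * s ^ i)"
    by (rule sum_mset_sum_swap)
  also have "\<dots> = (\<Sum>i\<le>k. coeff P (size S - k + i) * (\<Sum>s\<in>#S. s ^ i))"
    by (simp add: sum_mset_distrib_left)
  finally show ?thesis ..
qed

lemma power_sums_roots_with_coeff_gap:
  fixes S :: "'a::idom multiset"
  assumes roots: "P = (\<Prod>s\<in>#S. [:-s, 1:])"
    and size: "size S = q + 1"
    and char: "of_nat q = (0 :: 'a)"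
    and gap: "\<And>i. 2 \<le> i \<Longrightarrow> i < q \<Longrightarrow> coeff P i = 0"
    and "k < q"
  shows "(\<Sum>s\<in>#S. s ^ k) = (- coeff P q) ^ k"
  using \<open>k < q\<close>
proof (induction k)
  case 0
  then show ?case
    using size char by simp
next
  case (Suc k)
  have monic: "coeff P (q + 1) = 1"
    using lead_coeff_prod_mset_linear [of S] by (simp add: roots degree_prod_mset_linear size)
  have low_terms: "(\<Sum>i<k. coeff P (q - k + i) * (\<Sum>s\<in>#S. s ^ i)) = 0"
    using Suc.prems by (intro sum.neutral) (auto intro: gap)
  have "of_nat (q - k) * coeff P (q - k) = (0 :: 'a)"
    using Suc.prems char by (cases "k = 0") (simp_all add: gap)
  moreover have "(\<Sum>i\<le>Suc k. coeff P (q - k + i) * (\<Sum>s\<in>#S. s ^ i))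
      = of_nat (q - k) * coeff P (q - k)"
    using newton_identity [of "Suc k" S] Suc.prems by (simp add: roots size)
  ultimately have "(\<Sum>s\<in>#S. s ^ Suc k) + coeff P q * (\<Sum>s\<in>#S. s ^ k) = 0"
    using Suc.prems monic low_terms by (simp add: lessThan_Suc_atMost [symmetric] add_ac)
  then show ?case
    using Suc by (simp add: eq_neg_iff_add_eq_0 [symmetric])
qed

lemma sum_mset_power_CHAR:
  fixes g :: "'b \<Rightarrow> 'a::comm_semiring_1"
  assumes "prime CHAR('a)" and "n = CHAR('a) ^ m"
  shows "(\<Sum>x\<in>#A. g x) ^ n = (\<Sum>x\<in>#A. g x ^ n)"
proof (induction A)
  case empty
  have "n > 0"
    using assms prime_gt_0_nat by simp
  then show ?case
    by (simp add: power_0_left)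
next
  case (add a A)
  then show ?case
    using freshmans_dream' [OF assms] by simp
qed

lemma of_nat_card_UNIV: "of_nat (card (UNIV :: 'a set)) = (0 :: 'a::{ring_1,finite})"
proof -
  have "(\<Sum>x\<in>UNIV. x + 1) = (\<Sum>x\<in>(UNIV :: 'a set). x)"
    by (rule sum.reindex_bij_witness [of _ "\<lambda>y. y - 1" "\<lambda>y. y + 1"]) auto
  then show ?thesis
    by (simp add: sum.distrib)
qed

lemma CHAR_eq_2_iff: "CHAR('a::{semiring_1,zero_neq_one}) = 2 \<longleftrightarrow> (2 :: 'a) = 0"
proof
  assume "(2 :: 'a) = 0"
  then show "CHAR('a) = 2"
    by (intro CHAR_eq_posI) (auto simp: less_2_cases_iff)
qed (metis of_nat_CHAR of_nat_numeral)

lemma two_eq_zero_if_card_power_two: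
  assumes "card (UNIV :: 'a set) = 2 ^ n"
  shows "(2 :: 'a::{field,finite}) = 0"
proof -
  have "(2 :: 'a) ^ n = 0"
    using of_nat_card_UNIV [where 'a = 'a] assms by simp
  then show ?thesis
    by simp
qed

text \<open>The library's \<open>finite_field_power_card_eq_same\<close> is stated for the sort
  \<open>finite_field\<close>, which a type variable of sort \<open>{field,finite}\<close> does not carry.\<close>

lemma power_card_UNIV: "x ^ card (UNIV :: 'a set) = (x :: 'a::{field,finite})"
proof (cases "x = 0")
  case False
  define U where "U = UNIV - {0 :: 'a}"
  have card_U: "card U = card (UNIV :: 'a set) - 1"
    by (simp add: U_def card_Diff_singleton)
  have "\<Prod>U = (\<Prod>y\<in>U. x * y)"
    using False by (intro prod.reindex_bij_witness [of _ "\<lambda>y. x * y" "\<lambda>y. y / x"])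
      (auto simp: U_def)
  also have "\<dots> = x ^ card U * \<Prod>U"
    by (simp add: prod.distrib)
  finally have "1 * \<Prod>U = x ^ card U * \<Prod>U"
    by simp
  moreover have "\<Prod>U \<noteq> 0"
    by (simp add: U_def)
  ultimately have "x ^ card U = 1"
    by (simp only: mult_cancel_right) simp
  then have "x * x ^ card U = x"
    by simp
  then show ?thesis
    using finite_UNIV_card_ge_0 [where 'a = 'a] by (simp add: card_U flip: power_Suc)
qed (simp add: finite_UNIV_card_ge_0)

text \<open>Substituting \<open>x = \<alpha> t + \<beta>\<close> into \<open>x^q + x = t^(q+1)\<close> and using that
  \<open>x \<mapsto> x^q\<close> is additive in characteristic 2 gives \<open>poly (hermitian_line_poly q \<alpha> \<beta>) t = 0\<close>.\<close>

definition hermitian_line_poly :: "nat \<Rightarrow> 'a::comm_ring_1 \<Rightarrow> 'a \<Rightarrow> 'a poly" where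
  "hermitian_line_poly q \<alpha> \<beta> = monom 1 (q + 1) + monom (\<alpha> ^ q) q + monom \<alpha> 1 + [:\<beta> + \<beta> ^ q:]"

lemma coeff_hermitian_line_poly:
  assumes "q \<ge> 2"
  shows "coeff (hermitian_line_poly q \<alpha> \<beta>) n =
    (if n = q + 1 then 1 else if n = q then \<alpha> ^ q else if n = 1 then \<alpha>
     else if n = 0 then \<beta> + \<beta> ^ q else 0)"
  using assms by (simp add: hermitian_line_poly_def coeff_monom coeff_pCons split: nat.split)

lemma degree_hermitian_line_poly:
  assumes "q \<ge> 2"
  shows "degree (hermitian_line_poly q \<alpha> \<beta>) = q + 1"
  using assms by (intro antisym degree_le le_degree) (auto simp: coeff_hermitian_line_poly)

lemma map_poly_hermitian_line_poly:
  assumes zero: "f 0 = 0"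
    and add: "\<And>x y. f (x + y) = f x + f y"
    and power: "\<And>x n. f (x ^ n) = f x ^ n"
  shows "map_poly f (hermitian_line_poly q \<alpha> \<beta>) = hermitian_line_poly q (f \<alpha>) (f \<beta>)"
proof -
  have "f 1 = 1"
    using power [of _ 0] by simp
  then show ?thesis
    by (intro poly_eqI)
      (simp add: hermitian_line_poly_def coeff_map_poly zero add power coeff_monom coeff_pCons
        split: nat.split)
qed

lemma power_sums_hermitian_line_poly_roots:
  fixes S :: "'a::idom multiset"
  assumes char: "CHAR('a) = 2" and "even q" and "q \<ge> 2"
    and roots: "hermitian_line_poly q a b = (\<Prod>s\<in>#S. [:-s, 1:])"
    and "k < q"
  shows "(\<Sum>s\<in>#S. s ^ k) = a ^ (q * k)"
proof -
  have size: "size S = q + 1"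
    using degree_hermitian_line_poly [OF \<open>q \<ge> 2\<close>, of a b]
    by (simp add: roots degree_prod_mset_linear)
  have "of_nat q = (0 :: 'a)"
    using \<open>even q\<close> by (simp add: of_nat_eq_0_iff_char_dvd char)
  then have "(\<Sum>s\<in>#S. s ^ k) = (- coeff (hermitian_line_poly q a b) q) ^ k"
    using \<open>q \<ge> 2\<close> \<open>k < q\<close>
    by (intro power_sums_roots_with_coeff_gap [OF roots size]) (auto simp: coeff_hermitian_line_poly)
  also have "\<dots> = a ^ (q * k)"
    using \<open>q \<ge> 2\<close> by (simp add: coeff_hermitian_line_poly uminus_CHAR_2 [OF char] power_mult)
  finally show ?thesis .
qed

lemma power_sums_q_multiple_hermitian_line_poly_roots:
  fixes S :: "'a::idom multiset"
  assumes char: "CHAR('a) = 2" and q: "q = 2 ^ m" "q \<ge> 2"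
    and roots: "hermitian_line_poly q a b = (\<Prod>s\<in>#S. [:-s, 1:])"
    and a: "a ^ (q * q) = a"
    and "k < q"
  shows "(\<Sum>s\<in>#S. s ^ (k * q)) = a ^ k"
proof -
  have "even q"
    using q by (cases m) simp_all
  have "(\<Sum>s\<in>#S. s ^ (k * q)) = (\<Sum>s\<in>#S. s ^ k) ^ q"
    unfolding power_mult by (rule sym, rule sum_mset_power_CHAR) (simp_all add: char q)
  also have "\<dots> = (a ^ (q * q)) ^ k"
    using power_sums_hermitian_line_poly_roots [OF char \<open>even q\<close> \<open>q \<ge> 2\<close> roots \<open>k < q\<close>]
    by (simp flip: power_mult add: ac_simps)
  finally show ?thesis
    by (simp only: a)
qed

theorem mainTheorem5:
  fixes q m :: nat and \<alpha> \<beta> :: "'a::{field,finite}"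
    and f :: "'a \<Rightarrow> 'b::field" and S :: "'b multiset"
  assumes q_pow: "q = 2 ^ m"
    and card: "card (UNIV :: 'a set) = q ^ 2"
    and f_add: "\<And>x y. f (x + y) = f x + f y"
    and f_mult: "\<And>x y. f (x * y) = f x * f y"
    and f_one: "f 1 = 1"
    and not_tangent: "\<not> line_tangent_hermitian q \<alpha> \<beta>"
    and roots: "map_poly f (monom 1 (q + 1) + monom (\<alpha> ^ q) q + monom \<alpha> 1 + [:\<beta> + \<beta> ^ q:])
                = prod_mset (image_mset (\<lambda>s. [:- s, 1:]) S)"
  shows "\<forall>k < q. sum_mset (image_mset (\<lambda>s. s ^ k) S) = f \<alpha> ^ (q * k)
               \<and> sum_mset (image_mset (\<lambda>s. s ^ (k * q)) S) = f \<alpha> ^ k"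
proof -
  have f_zero: "f 0 = 0"
    using f_add [of 0 0] by (metis add_cancel_right_right)
  have f_power: "f (x ^ n) = f x ^ n" for x n
    by (induction n) (simp_all add: f_one f_mult)
  have "2 \<le> q ^ 2"
    using card_mono [of UNIV "{0, 1 :: 'a}"] card by simp
  then have "q \<ge> 2" and "even q"
    using q_pow by (cases m; simp)+
  have "card (UNIV :: 'a set) = 2 ^ (m * 2)"
    by (simp only: card q_pow power_mult)
  then have "(2 :: 'a) = 0"
    by (rule two_eq_zero_if_card_power_two)
  then have char: "CHAR('b) = 2"
    using f_add [of 1 1] f_one f_zero by (simp add: CHAR_eq_2_iff)
  have roots': "hermitian_line_poly q (f \<alpha>) (f \<beta>) = (\<Prod>s\<in>#S. [:-s, 1:])"
    using roots [folded hermitian_line_poly_def]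
    by (simp add: map_poly_hermitian_line_poly f_zero f_add f_power)
  have "f \<alpha> ^ (q * q) = f \<alpha>"
    using power_card_UNIV [of \<alpha>] card by (simp add: power2_eq_square flip: f_power)
  then show ?thesis
    using power_sums_hermitian_line_poly_roots [OF char \<open>even q\<close> \<open>q \<ge> 2\<close> roots']
      power_sums_q_multiple_hermitian_line_poly_roots [OF char q_pow \<open>q \<ge> 2\<close> roots']
    by blast
qed

end
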